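(* For every prime $p$, the polynomial ring $\mathbb{Z}_p[x]$ in one variable over the prime field $\mathbb{Z}_p$ is finitely separable.
   Context: A ring $R$ is finitely separable if for every $r\in R$ and every subring $A\subseteq R$ (not necessarily containing $1$) with $r\notin A$ there exist a finite ring $F$ and a ring homomorphism $\varphi:R\to F$ with $\varphi(r)\notin\varphi(A)$. *)

theory Defs
  imports "HOL-Algebra.Algebra" "HOL-Number_Theory.Residues"
begin

definition nonunital_subring :: "'a set \<Rightarrow> ('a, 'm) ring_scheme \<Rightarrow> bool" where
  "nonunital_subring A R \<longleftrightarrow> A \<subseteq> carrier R \<and> additive_subgroup A R \<and>
     (\<forall>x\<in>A. \<forall>y\<in>A. x \<otimes>\<^bsub>R\<^esub> y \<in> A)"

text \<open>Finitely separable ring. Finite target rings are represented with carriers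
  of type nat; every finite ring is isomorphic to such a ring.\<close>
definition finitely_separable :: "('a, 'm) ring_scheme \<Rightarrow> bool" where
  "finitely_separable R \<longleftrightarrow>
     (\<forall>r\<in>carrier R. \<forall>A. nonunital_subring A R \<and> r \<notin> A \<longrightarrow>
        (\<exists>(F :: nat ring) \<phi>. ring F \<and> finite (carrier F) \<and> \<phi> \<in> ring_hom R F \<and>
            \<phi> r \<notin> \<phi> ` A))"

end

(*
  A nonzero polynomial f has a finite quotient F_p[x]/(f), so it suffices to find, for r outside
  a subring A, some f \<noteq> 0 with r \<notin> A + f F_p[x]. If A consists of constants, f = x^(deg r + 1)
  works. Otherwise fix g \<in> A of degree d > 0 and call a residue c < d missing if no nonzero
  element of A has degree congruent to c mod d. Let Q be the additive group of sums \<Sum> g^j s_j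
  where each s_j only involves monomials x^c with c missing; nonzero elements of Q have missing
  degree mod d. Both A and Q are stable under multiplication by g, and since every coefficient is
  an integer multiple of 1, every polynomial lies in A + Q up to a polynomial of bounded degree.
  By pigeonhole, two powers g^j and g^j' (j < j') act identically on these finitely many
  remainders modulo A + Q, so h = g^j' - g^j maps F_p[x] into A + Q. Then f = g^n h with n > deg r
  works: r = a + g^n q with a \<in> A and 0 \<noteq> q \<in> Q would give a the degree of g^n q, which is
  missing.
*)

theory Submission
  imports Defs
begin

lemma finite_ring_embeds_into_nat_ring:
  fixes Q :: "('b, 'm) ring_scheme"
  assumes Q: "ring Q" and fin: "finite (carrier Q)"
  shows "\<exists>(F::nat ring) \<beta>. ring F \<and> finite (carrier F) \<and> \<beta> \<in> ring_hom Q F \<and> inj_on \<beta> (carrier Q)"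
proof -
  interpret Q: ring Q by (rule Q)
  obtain \<beta> :: "'b \<Rightarrow> nat" where inj: "inj_on \<beta> (carrier Q)"
    using finite_imp_inj_to_nat_seg[OF fin] by blast
  let ?\<alpha> = "inv_into (carrier Q) \<beta>"
  define F :: "nat ring" where "F =
    \<lparr>carrier = \<beta> ` carrier Q, monoid.mult = (\<lambda>x y. \<beta> (?\<alpha> x \<otimes>\<^bsub>Q\<^esub> ?\<alpha> y)), one = \<beta> \<one>\<^bsub>Q\<^esub>,
     ring.zero = \<beta> \<zero>\<^bsub>Q\<^esub>, ring.add = (\<lambda>x y. \<beta> (?\<alpha> x \<oplus>\<^bsub>Q\<^esub> ?\<alpha> y))\<rparr>"
  have iso: "\<beta> \<in> ring_iso Q F"
  proof (rule ring_iso_memI)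
    show "bij_betw \<beta> (carrier Q) (carrier F)"
      using inj by (simp add: F_def bij_betw_def)
  qed (auto simp: F_def inv_into_f_f[OF inj])
  have "ring (F\<lparr>zero := \<beta> \<zero>\<^bsub>Q\<^esub>\<rparr>)" by (rule Q.ring_iso_imp_img_ring[OF iso])
  moreover have "F\<lparr>zero := \<beta> \<zero>\<^bsub>Q\<^esub>\<rparr> = F" by (simp add: F_def)
  moreover have "finite (carrier F)" using fin by (simp add: F_def)
  ultimately show ?thesis using iso inj unfolding ring_iso_def by auto
qed

lemma (in ring) finite_quotient_separates:
  assumes I: "ideal I R" and fin: "finite (carrier (R Quot I))"
    and A: "A \<subseteq> carrier R" and r: "r \<in> carrier R" and sep: "\<And>a. a \<in> A \<Longrightarrow> r \<ominus> a \<notin> I"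
  shows "\<exists>(F::nat ring) \<phi>. ring F \<and> finite (carrier F) \<and> \<phi> \<in> ring_hom R F \<and> \<phi> r \<notin> \<phi> ` A"
proof -
  interpret I: ideal I R by (rule I)
  obtain F :: "nat ring" and \<beta> where F: "ring F" "finite (carrier F)"
    and \<beta>: "\<beta> \<in> ring_hom (R Quot I) F" and inj: "inj_on \<beta> (carrier (R Quot I))"
    using finite_ring_embeds_into_nat_ring[OF I.quotient_is_ring fin] by blast
  let ?\<phi> = "\<lambda>x. \<beta> (I +> x)"
  have "?\<phi> r \<noteq> ?\<phi> a" if a: "a \<in> A" for a
  proof
    assume "?\<phi> r = ?\<phi> a"
    moreover have "I +> r \<in> carrier (R Quot I)" "I +> a \<in> carrier (R Quot I)"
      using ring_hom_closed[OF I.rcos_ring_hom] r a A by auto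
    ultimately have "I +> r = I +> a" using inj by (auto dest: inj_onD)
    then show False using sep[OF a] quotient_eq_iff_same_a_r_cos[OF I r] a A by auto
  qed
  moreover have "?\<phi> \<in> ring_hom R F"
    using ring_hom_trans[OF I.rcos_ring_hom \<beta>] by (simp add: comp_def)
  ultimately show ?thesis using F by blast
qed

lemma (in UP_ring) finite_bounded_degree:
  assumes fin: "finite (carrier R)"
  shows "finite {p \<in> carrier P. deg R p \<le> n}"
proof -
  let ?B = "{p \<in> carrier P. deg R p \<le> n}"
  let ?coeffs = "\<lambda>p. restrict (UnivPoly.coeff P p) {..n}"
  have "inj_on ?coeffs ?B"
  proof (rule inj_onI)
    fix p q assume p: "p \<in> ?B" and q: "q \<in> ?B" and eq: "?coeffs p = ?coeffs q"
    show "p = q"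
    proof (rule up_eqI)
      fix k show "UnivPoly.coeff P p k = UnivPoly.coeff P q k"
      proof (cases "k \<le> n")
        case True then show ?thesis using fun_cong[OF eq, of k] by simp
      next
        case False then show ?thesis using p q deg_aboveD[of p k] deg_aboveD[of q k] by auto
      qed
    qed (use p q in auto)
  qed
  moreover have "?coeffs ` ?B \<subseteq> PiE {..n} (\<lambda>_. carrier R)"
    by (auto simp: PiE_iff extensional_def split: if_splits)
  moreover have "finite (PiE {..n} (\<lambda>_. carrier R))" using fin by (simp add: finite_PiE)
  ultimately show ?thesis by (meson finite_imageD finite_subset)
qed

lemma (in UP_ring) coeff_add_pow:
  fixes n :: nat
  shows "p \<in> carrier P \<Longrightarrow> UnivPoly.coeff P ([n] \<cdot>\<^bsub>P\<^esub> p) k = [n] \<cdot> UnivPoly.coeff P p k"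
  by (induct n) (auto simp: P.add.nat_pow_Suc R.add.nat_pow_Suc)

lemma (in UP_ring) deg_add_pow_le:
  fixes n :: nat
  assumes "p \<in> carrier P"
  shows "deg R ([n] \<cdot>\<^bsub>P\<^esub> p) \<le> deg R p"
  using assms by (intro deg_aboveI) (simp_all add: coeff_add_pow deg_aboveD R.add.nat_pow_one)

lemma (in abelian_monoid) add_pow_mem:
  fixes n :: nat
  assumes "\<zero> \<in> B" "\<And>x y. x \<in> B \<Longrightarrow> y \<in> B \<Longrightarrow> x \<oplus> y \<in> B" "x \<in> B"
  shows "[n] \<cdot> x \<in> B"
  using assms by (induct n) (auto simp: add.nat_pow_Suc)

lemma (in UP_domain) pow_nonzero_deg:
  assumes "p \<in> carrier P" "p \<noteq> \<zero>\<^bsub>P\<^esub>"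
  shows "p [^]\<^bsub>P\<^esub> n \<noteq> \<zero>\<^bsub>P\<^esub> \<and> deg R (p [^]\<^bsub>P\<^esub> n) = n * deg R p"
  using assms by (induct n) (auto simp: domain.integral_iff[OF UP_domain])

locale UP_field = UP + R?: field R

sublocale UP_field < UP_domain
  by intro_locales [1] (rule P_def)

context UP_field
begin

lemma remainder_mod_principal_ideal:
  assumes f: "f \<in> carrier P" "f \<noteq> \<zero>\<^bsub>P\<^esub>" and w: "w \<in> carrier P"
  shows "\<exists>u\<in>carrier P. deg R u \<le> deg R f \<and> w \<ominus>\<^bsub>P\<^esub> u \<in> PIdl\<^bsub>P\<^esub> f"
proof -
  obtain q r and k :: nat where q: "q \<in> carrier P" and r: "r \<in> carrier P"
    and div: "lcoeff f [^] k \<odot>\<^bsub>P\<^esub> w = f \<otimes>\<^bsub>P\<^esub> q \<oplus>\<^bsub>P\<^esub> r" and deg_r: "r = \<zero>\<^bsub>P\<^esub> \<or> deg R r < deg R f"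
    using long_div_theorem[OF f(1) w f(2)] by blast
  define c where "c = lcoeff f [^] k"
  have "lcoeff f \<in> Units R" using f lcoeff_nonzero by (simp add: field_Units)
  then have "c \<in> Units R" unfolding c_def by (rule R.Units_pow_closed)
  then have c: "c \<in> carrier R" "inv c \<in> carrier R" "inv c \<otimes> c = \<one>"
    by (simp_all add: R.Units_closed R.Units_inv_closed R.Units_l_inv)
  define u where "u = inv c \<odot>\<^bsub>P\<^esub> r"
  have u: "u \<in> carrier P" using c r by (simp add: u_def)
  have "w = inv c \<odot>\<^bsub>P\<^esub> (c \<odot>\<^bsub>P\<^esub> w)"
    using c w by (simp add: UP_smult_assoc1[symmetric])
  also have "\<dots> = f \<otimes>\<^bsub>P\<^esub> (inv c \<odot>\<^bsub>P\<^esub> q) \<oplus>\<^bsub>P\<^esub> u"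
  proof -
    have "f \<otimes>\<^bsub>P\<^esub> (inv c \<odot>\<^bsub>P\<^esub> q) = inv c \<odot>\<^bsub>P\<^esub> (f \<otimes>\<^bsub>P\<^esub> q)"
      using c q f by (metis P.m_comm UP_smult_assoc2 UP_smult_closed)
    then show ?thesis using div c q r f unfolding c_def[symmetric] u_def
      by (simp add: UP_smult_r_distr)
  qed
  finally have "w \<ominus>\<^bsub>P\<^esub> u = (inv c \<odot>\<^bsub>P\<^esub> q) \<otimes>\<^bsub>P\<^esub> f"
    using c q f u by (simp add: P.m_comm P.minus_eq P.a_assoc P.r_neg)
  then have "w \<ominus>\<^bsub>P\<^esub> u \<in> PIdl\<^bsub>P\<^esub> f"
    using c q unfolding cgenideal_def by auto
  moreover have "deg R u \<le> deg R f" using deg_r c r by (auto simp: u_def)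
  ultimately show ?thesis using u by blast
qed

lemma finite_quotient_principal_ideal:
  assumes fin: "finite (carrier R)" and f: "f \<in> carrier P" "f \<noteq> \<zero>\<^bsub>P\<^esub>"
  shows "finite (carrier (P Quot PIdl\<^bsub>P\<^esub> f))"
proof -
  let ?I = "PIdl\<^bsub>P\<^esub> f"
  have I: "ideal ?I P" by (rule P.cgenideal_ideal[OF f(1)])
  have "carrier (P Quot ?I) \<subseteq> (\<lambda>u. ?I +>\<^bsub>P\<^esub> u) ` {u \<in> carrier P. deg R u \<le> deg R f}"
  proof
    fix C assume "C \<in> carrier (P Quot ?I)"
    then obtain w where w: "w \<in> carrier P" "C = ?I +>\<^bsub>P\<^esub> w"
      unfolding FactRing_def A_RCOSETS_def' by auto
    obtain u where u: "u \<in> carrier P" "deg R u \<le> deg R f" "w \<ominus>\<^bsub>P\<^esub> u \<in> ?I"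
      using remainder_mod_principal_ideal[OF f w(1)] by blast
    then have "C = ?I +>\<^bsub>P\<^esub> u" using w P.quotient_eq_iff_same_a_r_cos[OF I] by simp
    then show "C \<in> (\<lambda>u. ?I +>\<^bsub>P\<^esub> u) ` {u \<in> carrier P. deg R u \<le> deg R f}" using u by blast
  qed
  then show ?thesis using finite_bounded_degree[OF fin] finite_surj by blast
qed

lemma finitely_separable_if_separating_multiples:
  assumes fin: "finite (carrier R)"
    and mult: "\<And>r A. r \<in> carrier P \<Longrightarrow> nonunital_subring A P \<Longrightarrow> r \<notin> A \<Longrightarrow>
      \<exists>f\<in>carrier P. f \<noteq> \<zero>\<^bsub>P\<^esub> \<and> (\<forall>a\<in>A. \<forall>m\<in>carrier P. r \<noteq> a \<oplus>\<^bsub>P\<^esub> f \<otimes>\<^bsub>P\<^esub> m)"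
  shows "finitely_separable P"
  unfolding finitely_separable_def
proof (intro ballI allI impI, elim conjE)
  fix r A assume r: "r \<in> carrier P" and A: "nonunital_subring A P" and rA: "r \<notin> A"
  have AP: "A \<subseteq> carrier P" using A unfolding nonunital_subring_def by blast
  obtain f where f: "f \<in> carrier P" "f \<noteq> \<zero>\<^bsub>P\<^esub>"
    and sep: "\<forall>a\<in>A. \<forall>m\<in>carrier P. r \<noteq> a \<oplus>\<^bsub>P\<^esub> f \<otimes>\<^bsub>P\<^esub> m"
    using mult[OF r A rA] by blast
  have "r \<ominus>\<^bsub>P\<^esub> a \<notin> PIdl\<^bsub>P\<^esub> f" if a: "a \<in> A" for a
  proof
    assume "r \<ominus>\<^bsub>P\<^esub> a \<in> PIdl\<^bsub>P\<^esub> f"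
    then obtain m where m: "m \<in> carrier P" "r \<ominus>\<^bsub>P\<^esub> a = m \<otimes>\<^bsub>P\<^esub> f"
      unfolding cgenideal_def by blast
    have "a \<in> carrier P" using a AP by blast
    then have "r = a \<oplus>\<^bsub>P\<^esub> (r \<ominus>\<^bsub>P\<^esub> a)" using r by algebra
    then have "r = a \<oplus>\<^bsub>P\<^esub> f \<otimes>\<^bsub>P\<^esub> m" using m f by (simp add: P.m_comm)
    then show False using sep a m by blast
  qed
  then show "\<exists>(F::nat ring) \<phi>. ring F \<and> finite (carrier F) \<and> \<phi> \<in> ring_hom P F \<and> \<phi> r \<notin> \<phi> ` A"
    by (intro P.finite_quotient_separates[OF P.cgenideal_ideal[OF f(1)]]
        finite_quotient_principal_ideal[OF fin f] AP r)
qed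

lemma (in UP_domain) monom_one_nonzero: "UnivPoly.monom P \<one> n \<noteq> \<zero>\<^bsub>P\<^esub>"
proof
  assume "UnivPoly.monom P \<one> n = \<zero>\<^bsub>P\<^esub>"
  then have "UnivPoly.coeff P (UnivPoly.monom P \<one> n) n = \<zero>" by simp
  then show False by simp
qed

lemma (in UP_domain) separating_multiple_of_low_degree:
  assumes r: "r \<in> carrier P" "r \<notin> A" and A: "A \<subseteq> carrier P" "\<And>a. a \<in> A \<Longrightarrow> deg R a \<le> deg R r"
  shows "\<exists>f\<in>carrier P. f \<noteq> \<zero>\<^bsub>P\<^esub> \<and> (\<forall>a\<in>A. \<forall>m\<in>carrier P. r \<noteq> a \<oplus>\<^bsub>P\<^esub> f \<otimes>\<^bsub>P\<^esub> m)"
proof -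
  define f where "f = UnivPoly.monom P \<one> (Suc (deg R r))"
  have f: "f \<in> carrier P" "deg R f = Suc (deg R r)" by (simp_all add: f_def)
  have f_nonzero: "f \<noteq> \<zero>\<^bsub>P\<^esub>" unfolding f_def by (rule monom_one_nonzero)
  have "r \<noteq> a \<oplus>\<^bsub>P\<^esub> f \<otimes>\<^bsub>P\<^esub> m" if a: "a \<in> A" and m: "m \<in> carrier P" for a m
  proof
    assume eq: "r = a \<oplus>\<^bsub>P\<^esub> f \<otimes>\<^bsub>P\<^esub> m"
    have a_carrier: "a \<in> carrier P" using a A(1) by blast
    show False
    proof (cases "m = \<zero>\<^bsub>P\<^esub>")
      case True
      then show False using eq a_carrier f a r(2) by simp
    next
      case False
      have "f \<otimes>\<^bsub>P\<^esub> m = r \<oplus>\<^bsub>P\<^esub> \<ominus>\<^bsub>P\<^esub> a" using eq a_carrier f(1) m by algebra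
      moreover have "deg R (r \<oplus>\<^bsub>P\<^esub> \<ominus>\<^bsub>P\<^esub> a) \<le> deg R r"
        using deg_add[OF r(1), of "\<ominus>\<^bsub>P\<^esub> a"] a_carrier A(2)[OF a] by simp
      moreover have "deg R (f \<otimes>\<^bsub>P\<^esub> m) = Suc (deg R r) + deg R m"
        using f f_nonzero m False by simp
      ultimately show False by simp
    qed
  qed
  then show ?thesis using f f_nonzero by blast
qed

end

locale UP_prime_field = UP_field +
  assumes finite_carrier: "finite (carrier R)"
    and generated_by_one: "carrier R \<subseteq> range (\<lambda>n::nat. [n] \<cdot> \<one>)"
begin

lemma nat_multiple_with_coeff:
  assumes t: "t \<in> carrier P" "t \<noteq> \<zero>\<^bsub>P\<^esub>" and c: "c \<in> carrier R"
  obtains n :: nat where "UnivPoly.coeff P ([n] \<cdot>\<^bsub>P\<^esub> t) (deg R t) = c"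
proof -
  have "lcoeff t \<in> Units R" using t lcoeff_nonzero by (simp add: field_Units)
  then have l: "lcoeff t \<in> carrier R" "inv (lcoeff t) \<in> carrier R" "inv (lcoeff t) \<otimes> lcoeff t = \<one>"
    by (simp_all add: R.Units_closed R.Units_inv_closed R.Units_l_inv)
  obtain n :: nat where n: "c \<otimes> inv (lcoeff t) = [n] \<cdot> \<one>"
    using generated_by_one c l by blast
  have "UnivPoly.coeff P ([n] \<cdot>\<^bsub>P\<^esub> t) (deg R t) = [n] \<cdot> lcoeff t"
    using t by (simp add: coeff_add_pow)
  also have "\<dots> = ([n] \<cdot> \<one>) \<otimes> lcoeff t"
    using l by (simp add: R.add_pow_ldistr)
  also have "\<dots> = c" using n l c by (metis R.m_assoc R.r_one)
  finally show ?thesis by (rule that)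
qed

end

locale nonconstant_subring = UP_prime_field +
  fixes A and g
  assumes subring: "nonunital_subring A P" and g_in_A: "g \<in> A" and deg_g_pos: "0 < deg R g"
begin

sublocale A: additive_subgroup A P
  using subring unfolding nonunital_subring_def by blast

lemma A_mult_closed: "a \<in> A \<Longrightarrow> b \<in> A \<Longrightarrow> a \<otimes>\<^bsub>P\<^esub> b \<in> A"
  using subring unfolding nonunital_subring_def by blast

lemma A_carrier: "a \<in> A \<Longrightarrow> a \<in> carrier P"
  using A.a_subset by blast

lemma g_carrier: "g \<in> carrier P"
  using g_in_A by (rule A_carrier)

lemma g_pow:
  fixes k :: nat
  shows "g [^]\<^bsub>P\<^esub> k \<in> carrier P" "g [^]\<^bsub>P\<^esub> k \<noteq> \<zero>\<^bsub>P\<^esub>" "deg R (g [^]\<^bsub>P\<^esub> k) = k * deg R g"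
proof -
  have "g \<noteq> \<zero>\<^bsub>P\<^esub>" using deg_g_pos by auto
  then show "g [^]\<^bsub>P\<^esub> k \<in> carrier P" "g [^]\<^bsub>P\<^esub> k \<noteq> \<zero>\<^bsub>P\<^esub>" "deg R (g [^]\<^bsub>P\<^esub> k) = k * deg R g"
    using g_carrier pow_nonzero_deg[OF g_carrier] by auto
qed

lemma g_pow_mult_A:
  fixes k :: nat
  shows "a \<in> A \<Longrightarrow> g [^]\<^bsub>P\<^esub> k \<otimes>\<^bsub>P\<^esub> a \<in> A"
proof (induct k arbitrary: a)
  case 0
  then show ?case by (simp add: A_carrier)
next
  case (Suc k)
  have "g [^]\<^bsub>P\<^esub> Suc k \<otimes>\<^bsub>P\<^esub> a = g [^]\<^bsub>P\<^esub> k \<otimes>\<^bsub>P\<^esub> (g \<otimes>\<^bsub>P\<^esub> a)"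
    using Suc.prems by (simp add: P.m_assoc A_carrier g_carrier)
  then show ?case using Suc.hyps[OF A_mult_closed[OF g_in_A Suc.prems]] by (simp only:)
qed

text \<open>\<open>missing_span\<close> is the group of sums \<open>\<Sum>\<^sub>j g\<^sup>j s\<^sub>j\<close> with all \<open>s\<^sub>j \<in> missing_polys\<close>;
  generating it in Horner form \<open>s\<^sub>0 + g (s\<^sub>1 + g (\<dots>))\<close> lets degrees be read off by induction.\<close>

definition missing_residues :: "nat set" where
  "missing_residues = {c. c < deg R g \<and> (\<forall>a\<in>A. a \<noteq> \<zero>\<^bsub>P\<^esub> \<longrightarrow> deg R a mod deg R g \<noteq> c)}"

definition missing_polys :: "(nat \<Rightarrow> 'a) set" where
  "missing_polys = {s \<in> carrier P. \<forall>e. UnivPoly.coeff P s e \<noteq> \<zero> \<longrightarrow> e \<in> missing_residues}"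

inductive_set missing_span :: "(nat \<Rightarrow> 'a) set" where
  zero: "\<zero>\<^bsub>P\<^esub> \<in> missing_span"
| horner: "q \<in> missing_span \<Longrightarrow> s \<in> missing_polys \<Longrightarrow> g \<otimes>\<^bsub>P\<^esub> q \<oplus>\<^bsub>P\<^esub> s \<in> missing_span"

lemma missing_polys_carrier: "s \<in> missing_polys \<Longrightarrow> s \<in> carrier P"
  unfolding missing_polys_def by blast

lemma missing_polys_zero: "\<zero>\<^bsub>P\<^esub> \<in> missing_polys"
  unfolding missing_polys_def by simp

lemma missing_polys_add:
  assumes "s \<in> missing_polys" "t \<in> missing_polys"
  shows "s \<oplus>\<^bsub>P\<^esub> t \<in> missing_polys"
  using assms unfolding missing_polys_def by (auto, metis R.add.l_one coeff_closed)

lemma missing_polys_neg: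
  assumes "s \<in> missing_polys"
  shows "\<ominus>\<^bsub>P\<^esub> s \<in> missing_polys"
  using assms unfolding missing_polys_def by auto

lemma missing_polys_monom:
  "c \<in> missing_residues \<Longrightarrow> a \<in> carrier R \<Longrightarrow> UnivPoly.monom P a c \<in> missing_polys"
  unfolding missing_polys_def by auto

lemma missing_polys_deg:
  assumes "s \<in> missing_polys" "s \<noteq> \<zero>\<^bsub>P\<^esub>"
  shows "deg R s \<in> missing_residues"
  using assms lcoeff_nonzero unfolding missing_polys_def by auto

lemma missing_polys_deg_less: "s \<in> missing_polys \<Longrightarrow> deg R s < deg R g"
  using missing_polys_deg deg_g_pos unfolding missing_residues_def by fastforce

lemma missing_span_carrier: "q \<in> missing_span \<Longrightarrow> q \<in> carrier P"
  by (induction rule: missing_span.induct) (auto simp: g_carrier missing_polys_carrier)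

lemma missing_span_add:
  assumes "q \<in> missing_span" "q' \<in> missing_span"
  shows "q \<oplus>\<^bsub>P\<^esub> q' \<in> missing_span"
  using assms
proof (induction q arbitrary: q' rule: missing_span.induct)
  case zero
  then show ?case by (simp add: missing_span_carrier)
next
  case (horner q s)
  note IH = horner.IH and q = horner.hyps(1) and s = horner.hyps(2)
  have qs: "q \<in> carrier P" "s \<in> carrier P"
    using q s by (simp_all add: missing_span_carrier missing_polys_carrier)
  from horner.prems show ?case
  proof cases
    case zero
    then show ?thesis using missing_span.horner[OF q s] qs g_carrier by simp
  next
    case (horner q'' s')
    have "q'' \<in> carrier P" "s' \<in> carrier P"
      using horner by (simp_all add: missing_span_carrier missing_polys_carrier)
    then have "g \<otimes>\<^bsub>P\<^esub> q \<oplus>\<^bsub>P\<^esub> s \<oplus>\<^bsub>P\<^esub> q' =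
        g \<otimes>\<^bsub>P\<^esub> (q \<oplus>\<^bsub>P\<^esub> q'') \<oplus>\<^bsub>P\<^esub> (s \<oplus>\<^bsub>P\<^esub> s')"
      using horner(1) qs g_carrier by algebra
    then show ?thesis
      using missing_span.horner[OF IH[OF horner(2)] missing_polys_add[OF s horner(3)]] by simp
  qed
qed

lemma missing_span_neg: "q \<in> missing_span \<Longrightarrow> \<ominus>\<^bsub>P\<^esub> q \<in> missing_span"
proof (induction rule: missing_span.induct)
  case zero
  then show ?case by (simp add: missing_span.zero)
next
  case (horner q s)
  have "q \<in> carrier P" "s \<in> carrier P"
    using horner.hyps by (simp_all add: missing_span_carrier missing_polys_carrier)
  then have "\<ominus>\<^bsub>P\<^esub> (g \<otimes>\<^bsub>P\<^esub> q \<oplus>\<^bsub>P\<^esub> s) = g \<otimes>\<^bsub>P\<^esub> (\<ominus>\<^bsub>P\<^esub> q) \<oplus>\<^bsub>P\<^esub> \<ominus>\<^bsub>P\<^esub> s"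
    using g_carrier by algebra
  then show ?case
    using missing_span.horner[OF horner.IH missing_polys_neg[OF horner.hyps(2)]] by simp
qed

lemma missing_span_g_pow_mult:
  fixes k :: nat
  shows "q \<in> missing_span \<Longrightarrow> g [^]\<^bsub>P\<^esub> k \<otimes>\<^bsub>P\<^esub> q \<in> missing_span"
proof (induct k arbitrary: q)
  case 0
  then show ?case by (simp add: missing_span_carrier)
next
  case (Suc k)
  have "g \<otimes>\<^bsub>P\<^esub> q \<in> missing_span"
    using missing_span.horner[OF Suc.prems missing_polys_zero] Suc.prems g_carrier
    by (simp add: missing_span_carrier)
  moreover have "g [^]\<^bsub>P\<^esub> Suc k \<otimes>\<^bsub>P\<^esub> q = g [^]\<^bsub>P\<^esub> k \<otimes>\<^bsub>P\<^esub> (g \<otimes>\<^bsub>P\<^esub> q)"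
    using Suc.prems by (simp add: P.m_assoc missing_span_carrier g_carrier)
  ultimately show ?case using Suc.hyps by (simp only:)
qed

lemma missing_span_monom:
  assumes "c \<in> missing_residues" "a \<in> carrier R"
  shows "UnivPoly.monom P a c \<in> missing_span"
  using missing_span.horner[OF missing_span.zero missing_polys_monom[OF assms]] g_carrier assms
  by simp

lemma missing_span_deg:
  assumes "q \<in> missing_span" "q \<noteq> \<zero>\<^bsub>P\<^esub>"
  shows "deg R q mod deg R g \<in> missing_residues"
  using assms
proof induction
  case zero
  then show ?case by simp
next
  case (horner q s)
  have q: "q \<in> carrier P" and s: "s \<in> carrier P"
    using horner.hyps by (simp_all add: missing_span_carrier missing_polys_carrier)
  have s_less: "deg R s < deg R g" using missing_polys_deg_less[OF horner.hyps(2)] .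
  show ?case
  proof (cases "q = \<zero>\<^bsub>P\<^esub>")
    case True
    then have "s \<noteq> \<zero>\<^bsub>P\<^esub>" "g \<otimes>\<^bsub>P\<^esub> q \<oplus>\<^bsub>P\<^esub> s = s"
      using horner.prems s g_carrier by auto
    then show ?thesis using missing_polys_deg[OF horner.hyps(2)] s_less by simp
  next
    case False
    have "g \<noteq> \<zero>\<^bsub>P\<^esub>" using deg_g_pos by auto
    then have deg_gq: "deg R (g \<otimes>\<^bsub>P\<^esub> q) = deg R g + deg R q"
      using False q g_carrier by simp
    then have "deg R (g \<otimes>\<^bsub>P\<^esub> q \<oplus>\<^bsub>P\<^esub> s) = deg R g + deg R q"
      using deg_add_eq[of "g \<otimes>\<^bsub>P\<^esub> q" s] q s g_carrier s_less by simp
    then show ?thesis using horner.IH[OF False] by simp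
  qed
qed

definition A_plus_span :: "(nat \<Rightarrow> 'a) set" where
  "A_plus_span = {a \<oplus>\<^bsub>P\<^esub> q | a q. a \<in> A \<and> q \<in> missing_span}"

lemma A_plus_spanI: "a \<in> A \<Longrightarrow> q \<in> missing_span \<Longrightarrow> a \<oplus>\<^bsub>P\<^esub> q \<in> A_plus_span"
  unfolding A_plus_span_def by blast

lemma A_plus_spanE:
  assumes "x \<in> A_plus_span"
  obtains a q where "a \<in> A" "q \<in> missing_span" "x = a \<oplus>\<^bsub>P\<^esub> q"
  using assms unfolding A_plus_span_def by blast

lemma A_plus_span_carrier: "x \<in> A_plus_span \<Longrightarrow> x \<in> carrier P"
  by (elim A_plus_spanE) (simp add: A_carrier missing_span_carrier)

lemma A_in_A_plus_span: "a \<in> A \<Longrightarrow> a \<in> A_plus_span"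
  using A_plus_spanI[OF _ missing_span.zero] by (simp add: A_carrier)

lemma missing_span_in_A_plus_span: "q \<in> missing_span \<Longrightarrow> q \<in> A_plus_span"
  using A_plus_spanI[OF A.zero_closed] by (simp add: missing_span_carrier)

lemma A_plus_span_add:
  assumes "x \<in> A_plus_span" "y \<in> A_plus_span"
  shows "x \<oplus>\<^bsub>P\<^esub> y \<in> A_plus_span"
proof -
  obtain a q a' q' where aq: "a \<in> A" "q \<in> missing_span" "x = a \<oplus>\<^bsub>P\<^esub> q"
    and aq': "a' \<in> A" "q' \<in> missing_span" "y = a' \<oplus>\<^bsub>P\<^esub> q'"
    using assms by (meson A_plus_spanE)
  have "x \<oplus>\<^bsub>P\<^esub> y = (a \<oplus>\<^bsub>P\<^esub> a') \<oplus>\<^bsub>P\<^esub> (q \<oplus>\<^bsub>P\<^esub> q')"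
    using aq aq' A_carrier missing_span_carrier by (simp add: P.a_ac)
  then show ?thesis
    using A_plus_spanI[OF A.a_closed[OF aq(1) aq'(1)] missing_span_add[OF aq(2) aq'(2)]] by simp
qed

lemma A_plus_span_minus:
  assumes "x \<in> A_plus_span" "y \<in> A_plus_span"
  shows "x \<ominus>\<^bsub>P\<^esub> y \<in> A_plus_span"
proof -
  obtain a q where aq: "a \<in> A" "q \<in> missing_span" "y = a \<oplus>\<^bsub>P\<^esub> q"
    using assms(2) by (rule A_plus_spanE)
  have "\<ominus>\<^bsub>P\<^esub> y = \<ominus>\<^bsub>P\<^esub> a \<oplus>\<^bsub>P\<^esub> \<ominus>\<^bsub>P\<^esub> q"
    using aq A_carrier missing_span_carrier by (simp add: P.minus_add)
  then have "\<ominus>\<^bsub>P\<^esub> y \<in> A_plus_span"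
    using A_plus_spanI[OF A.a_inv_closed[OF aq(1)] missing_span_neg[OF aq(2)]] by simp
  then show ?thesis using A_plus_span_add[OF assms(1)] by (simp add: P.minus_eq)
qed

lemma A_plus_span_g_pow_mult:
  fixes k :: nat
  assumes "x \<in> A_plus_span"
  shows "g [^]\<^bsub>P\<^esub> k \<otimes>\<^bsub>P\<^esub> x \<in> A_plus_span"
proof -
  obtain a q where aq: "a \<in> A" "q \<in> missing_span" "x = a \<oplus>\<^bsub>P\<^esub> q"
    using assms by (rule A_plus_spanE)
  then have "g [^]\<^bsub>P\<^esub> k \<otimes>\<^bsub>P\<^esub> x = g [^]\<^bsub>P\<^esub> k \<otimes>\<^bsub>P\<^esub> a \<oplus>\<^bsub>P\<^esub> g [^]\<^bsub>P\<^esub> k \<otimes>\<^bsub>P\<^esub> q"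
    using g_pow(1) A_carrier missing_span_carrier by (simp add: P.r_distr)
  then show ?thesis
    using A_plus_spanI[OF g_pow_mult_A[OF aq(1)] missing_span_g_pow_mult[OF aq(2)]] by simp
qed

lemma large_degrees_in_A:
  obtains E where "0 < E"
    "\<And>e. E \<le> e \<Longrightarrow> e mod deg R g \<notin> missing_residues \<Longrightarrow> \<exists>a\<in>A. a \<noteq> \<zero>\<^bsub>P\<^esub> \<and> deg R a = e"
proof -
  let ?d = "deg R g"
  have "\<exists>a. c < ?d \<and> c \<notin> missing_residues \<longrightarrow> a \<in> A \<and> a \<noteq> \<zero>\<^bsub>P\<^esub> \<and> deg R a mod ?d = c" for c
    unfolding missing_residues_def by blast
  then obtain rep where rep: "\<And>c. c < ?d \<Longrightarrow> c \<notin> missing_residues \<Longrightarrow>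
      rep c \<in> A \<and> rep c \<noteq> \<zero>\<^bsub>P\<^esub> \<and> deg R (rep c) mod ?d = c"
    by metis
  define E where "E = Suc (\<Sum>c<?d. deg R (rep c))"
  have "\<exists>a\<in>A. a \<noteq> \<zero>\<^bsub>P\<^esub> \<and> deg R a = e" if e: "E \<le> e" "e mod ?d \<notin> missing_residues" for e
  proof -
    let ?c = "e mod ?d"
    have c: "?c < ?d" using deg_g_pos by simp
    note a = rep[OF c e(2)]
    have "deg R (rep ?c) \<le> (\<Sum>c<?d. deg R (rep c))"
      using c by (intro member_le_sum) auto
    then have le: "deg R (rep ?c) \<le> e" using e(1) unfolding E_def by simp
    then have "?d dvd e - deg R (rep ?c)" using a mod_eq_dvd_iff_nat[OF le, of ?d] by simp
    then obtain k where "e - deg R (rep ?c) = ?d * k" by (elim dvdE)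
    then have "e = deg R (rep ?c) + k * ?d" using le by (simp add: mult.commute)
    moreover have "g [^]\<^bsub>P\<^esub> k \<otimes>\<^bsub>P\<^esub> rep ?c \<noteq> \<zero>\<^bsub>P\<^esub>"
      "deg R (g [^]\<^bsub>P\<^esub> k \<otimes>\<^bsub>P\<^esub> rep ?c) = k * ?d + deg R (rep ?c)"
      using a g_pow A_carrier by (simp_all add: domain.integral_iff[OF UP_domain])
    ultimately show ?thesis using g_pow_mult_A a by auto
  qed
  then show ?thesis using that[of E] by (simp add: E_def)
qed

lemma large_degrees_in_A_plus_span:
  obtains E where "0 < E" "\<And>e. E \<le> e \<Longrightarrow> \<exists>t\<in>A_plus_span. t \<noteq> \<zero>\<^bsub>P\<^esub> \<and> deg R t = e"
proof -
  let ?d = "deg R g"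
  obtain E where E: "0 < E"
    "\<And>e. E \<le> e \<Longrightarrow> e mod ?d \<notin> missing_residues \<Longrightarrow> \<exists>a\<in>A. a \<noteq> \<zero>\<^bsub>P\<^esub> \<and> deg R a = e"
    using large_degrees_in_A by blast
  have "\<exists>t\<in>A_plus_span. t \<noteq> \<zero>\<^bsub>P\<^esub> \<and> deg R t = e" if e: "E \<le> e" for e
  proof (cases "e mod ?d \<in> missing_residues")
    case True
    let ?m = "UnivPoly.monom P \<one> (e mod ?d)"
    have m: "?m \<in> carrier P" "?m \<noteq> \<zero>\<^bsub>P\<^esub>" "deg R ?m = e mod ?d"
      using monom_one_nonzero by simp_all
    have "g [^]\<^bsub>P\<^esub> (e div ?d) \<otimes>\<^bsub>P\<^esub> ?m \<in> A_plus_span"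
      by (intro missing_span_in_A_plus_span missing_span_g_pow_mult missing_span_monom True) simp
    moreover have "g [^]\<^bsub>P\<^esub> (e div ?d) \<otimes>\<^bsub>P\<^esub> ?m \<noteq> \<zero>\<^bsub>P\<^esub>"
      "deg R (g [^]\<^bsub>P\<^esub> (e div ?d) \<otimes>\<^bsub>P\<^esub> ?m) = e"
      using m g_pow by (simp_all add: domain.integral_iff[OF UP_domain] div_mult_mod_eq)
    ultimately show ?thesis by blast
  next
    case False
    then show ?thesis using E(2)[OF e] A_in_A_plus_span by blast
  qed
  then show ?thesis using E(1) that by blast
qed

lemma low_degree_representatives:
  obtains E where "\<And>w. w \<in> carrier P \<Longrightarrow> \<exists>u\<in>carrier P. deg R u < E \<and> w \<ominus>\<^bsub>P\<^esub> u \<in> A_plus_span"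
proof -
  obtain E where E: "0 < E" "\<And>e. E \<le> e \<Longrightarrow> \<exists>t\<in>A_plus_span. t \<noteq> \<zero>\<^bsub>P\<^esub> \<and> deg R t = e"
    using large_degrees_in_A_plus_span by blast
  have "\<exists>u\<in>carrier P. deg R u < E \<and> w \<ominus>\<^bsub>P\<^esub> u \<in> A_plus_span" if "w \<in> carrier P" for w
    using that
  proof (induction "deg R w" arbitrary: w rule: less_induct)
    case (less w)
    show ?case
    proof (cases "deg R w < E")
      case True
      then show ?thesis
        using less.prems A_in_A_plus_span[OF A.zero_closed]
        by (intro bexI[of _ w]) (simp_all add: P.minus_eq P.r_neg)
    next
      case False
      obtain t where t: "t \<in> A_plus_span" "t \<noteq> \<zero>\<^bsub>P\<^esub>" "deg R t = deg R w"
        using E(2) False by (meson not_less)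
      have t_carrier: "t \<in> carrier P" using t(1) by (rule A_plus_span_carrier)
      obtain n :: nat where n: "UnivPoly.coeff P ([n] \<cdot>\<^bsub>P\<^esub> t) (deg R w) = lcoeff w"
        using nat_multiple_with_coeff[OF t_carrier t(2) lcoeff_closed[OF less.prems]] t(3) by metis
      let ?t = "[n] \<cdot>\<^bsub>P\<^esub> t"
      have nt: "?t \<in> A_plus_span"
        using A_in_A_plus_span[OF A.zero_closed] A_plus_span_add t(1) by (rule P.add_pow_mem)
      have nt_carrier: "?t \<in> carrier P" using t_carrier by simp
      have "deg R (w \<oplus>\<^bsub>P\<^esub> \<ominus>\<^bsub>P\<^esub> ?t) < deg R w"
        using less.prems nt_carrier n deg_add_pow_le[OF t_carrier, of n] t(3) E(1) False
        by (intro deg_lcoeff_cancel) auto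
      then obtain u where u: "u \<in> carrier P" "deg R u < E" "w \<ominus>\<^bsub>P\<^esub> ?t \<ominus>\<^bsub>P\<^esub> u \<in> A_plus_span"
        using less.hyps[of "w \<ominus>\<^bsub>P\<^esub> ?t"] less.prems nt_carrier by (auto simp: P.minus_eq)
      have "w \<ominus>\<^bsub>P\<^esub> u = (w \<ominus>\<^bsub>P\<^esub> ?t \<ominus>\<^bsub>P\<^esub> u) \<oplus>\<^bsub>P\<^esub> ?t"
        using less.prems nt_carrier u(1) by algebra
      then show ?thesis using A_plus_span_add[OF u(3) nt] u(1,2) by auto
    qed
  qed
  then show ?thesis by (rule that)
qed

lemma powers_agree_on_low_degrees:
  assumes E: "\<And>w. w \<in> carrier P \<Longrightarrow> \<exists>u\<in>carrier P. deg R u < E \<and> w \<ominus>\<^bsub>P\<^esub> u \<in> A_plus_span"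
  obtains j j' :: nat where "j < j'"
    "\<And>u. u \<in> carrier P \<Longrightarrow> deg R u < E \<Longrightarrow> (g [^]\<^bsub>P\<^esub> j' \<ominus>\<^bsub>P\<^esub> g [^]\<^bsub>P\<^esub> j) \<otimes>\<^bsub>P\<^esub> u \<in> A_plus_span"
proof -
  let ?L = "{u \<in> carrier P. deg R u \<le> E}"
  \<comment> \<open>\<open>\<Phi> j\<close> tabulates the classes of \<open>g\<^sup>j u\<close> modulo \<open>A_plus_span\<close> for low-degree \<open>u\<close>;
    there are only finitely many such tables.\<close>
  define \<Phi> where "\<Phi> j = (\<lambda>u\<in>?L. {v \<in> ?L. g [^]\<^bsub>P\<^esub> j \<otimes>\<^bsub>P\<^esub> u \<ominus>\<^bsub>P\<^esub> v \<in> A_plus_span})" for j :: nat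
  have "\<Phi> j \<in> PiE ?L (\<lambda>_. Pow ?L)" for j
    unfolding \<Phi>_def restrict_PiE_iff by blast
  then have "range \<Phi> \<subseteq> PiE ?L (\<lambda>_. Pow ?L)" by blast
  moreover have "finite (PiE ?L (\<lambda>_. Pow ?L))"
    using finite_bounded_degree[OF finite_carrier] by (simp add: finite_PiE)
  ultimately have "\<not> inj \<Phi>" using finite_imageD finite_subset infinite_UNIV_nat by blast
  then obtain j1 j2 where "j1 \<noteq> j2" "\<Phi> j1 = \<Phi> j2" unfolding inj_def by blast
  then obtain j j' where jj: "j < j'" "\<Phi> j = \<Phi> j'" by (metis linorder_neqE_nat)
  have "(g [^]\<^bsub>P\<^esub> j' \<ominus>\<^bsub>P\<^esub> g [^]\<^bsub>P\<^esub> j) \<otimes>\<^bsub>P\<^esub> u \<in> A_plus_span"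
    if u: "u \<in> carrier P" "deg R u < E" for u
  proof -
    obtain v where v: "v \<in> carrier P" "deg R v < E" "g [^]\<^bsub>P\<^esub> j \<otimes>\<^bsub>P\<^esub> u \<ominus>\<^bsub>P\<^esub> v \<in> A_plus_span"
      using E[of "g [^]\<^bsub>P\<^esub> j \<otimes>\<^bsub>P\<^esub> u"] u g_pow by auto
    then have "v \<in> \<Phi> j' u" using jj(2) u unfolding \<Phi>_def by (metis (mono_tags, lifting) less_imp_le mem_Collect_eq restrict_apply')
    then have "g [^]\<^bsub>P\<^esub> j' \<otimes>\<^bsub>P\<^esub> u \<ominus>\<^bsub>P\<^esub> v \<in> A_plus_span" using u unfolding \<Phi>_def by simp
    moreover have "(g [^]\<^bsub>P\<^esub> j' \<otimes>\<^bsub>P\<^esub> u \<ominus>\<^bsub>P\<^esub> v) \<ominus>\<^bsub>P\<^esub> (g [^]\<^bsub>P\<^esub> j \<otimes>\<^bsub>P\<^esub> u \<ominus>\<^bsub>P\<^esub> v) =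
        (g [^]\<^bsub>P\<^esub> j' \<ominus>\<^bsub>P\<^esub> g [^]\<^bsub>P\<^esub> j) \<otimes>\<^bsub>P\<^esub> u"
      using u(1) v(1) g_pow(1)[of j] g_pow(1)[of j'] by algebra
    ultimately show ?thesis using A_plus_span_minus[OF _ v(3)] by metis
  qed
  then show ?thesis using jj(1) that by blast
qed

lemma multiplier_into_A_plus_span:
  obtains h where "h \<in> carrier P" "h \<noteq> \<zero>\<^bsub>P\<^esub>" "\<And>m. m \<in> carrier P \<Longrightarrow> h \<otimes>\<^bsub>P\<^esub> m \<in> A_plus_span"
proof -
  obtain E where E: "\<And>w. w \<in> carrier P \<Longrightarrow> \<exists>u\<in>carrier P. deg R u < E \<and> w \<ominus>\<^bsub>P\<^esub> u \<in> A_plus_span"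
    using low_degree_representatives by blast
  obtain j j' :: nat where jj: "j < j'" and low:
    "\<And>u. u \<in> carrier P \<Longrightarrow> deg R u < E \<Longrightarrow> (g [^]\<^bsub>P\<^esub> j' \<ominus>\<^bsub>P\<^esub> g [^]\<^bsub>P\<^esub> j) \<otimes>\<^bsub>P\<^esub> u \<in> A_plus_span"
    using powers_agree_on_low_degrees[OF E] by blast
  let ?h = "g [^]\<^bsub>P\<^esub> j' \<ominus>\<^bsub>P\<^esub> g [^]\<^bsub>P\<^esub> j"
  have h: "?h \<in> carrier P" using g_pow by simp
  have "?h \<noteq> \<zero>\<^bsub>P\<^esub>"
  proof
    assume "?h = \<zero>\<^bsub>P\<^esub>"
    then have "g [^]\<^bsub>P\<^esub> j' = g [^]\<^bsub>P\<^esub> j" using g_pow P.r_right_minus_eq by blast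
    then have "j' * deg R g = j * deg R g" using g_pow(3) by metis
    then show False using jj deg_g_pos by simp
  qed
  moreover have "?h \<otimes>\<^bsub>P\<^esub> m \<in> A_plus_span" if m: "m \<in> carrier P" for m
  proof -
    obtain u where u: "u \<in> carrier P" "deg R u < E" "m \<ominus>\<^bsub>P\<^esub> u \<in> A_plus_span"
      using E[OF m] by blast
    have "?h \<otimes>\<^bsub>P\<^esub> (m \<ominus>\<^bsub>P\<^esub> u) =
        g [^]\<^bsub>P\<^esub> j' \<otimes>\<^bsub>P\<^esub> (m \<ominus>\<^bsub>P\<^esub> u) \<ominus>\<^bsub>P\<^esub> g [^]\<^bsub>P\<^esub> j \<otimes>\<^bsub>P\<^esub> (m \<ominus>\<^bsub>P\<^esub> u)"
      using m u(1) g_pow(1)[of j] g_pow(1)[of j'] by algebra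
    then have "?h \<otimes>\<^bsub>P\<^esub> (m \<ominus>\<^bsub>P\<^esub> u) \<in> A_plus_span"
      using A_plus_span_minus A_plus_span_g_pow_mult u(3) by simp
    moreover have "?h \<otimes>\<^bsub>P\<^esub> m = ?h \<otimes>\<^bsub>P\<^esub> (m \<ominus>\<^bsub>P\<^esub> u) \<oplus>\<^bsub>P\<^esub> ?h \<otimes>\<^bsub>P\<^esub> u"
      using m u(1) h by algebra
    ultimately show ?thesis using A_plus_span_add low[OF u(1,2)] by simp
  qed
  ultimately show ?thesis using h that by blast
qed

lemma span_component_deg_le:
  assumes r: "r \<in> carrier P" "r \<notin> A" and a: "a \<in> A" and q: "q \<in> missing_span"
    and eq: "r = a \<oplus>\<^bsub>P\<^esub> q"
  shows "q \<noteq> \<zero>\<^bsub>P\<^esub> \<and> deg R q \<le> deg R r"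
proof -
  have a_carrier: "a \<in> carrier P" and q_carrier: "q \<in> carrier P"
    using a q by (simp_all add: A_carrier missing_span_carrier)
  have q_nonzero: "q \<noteq> \<zero>\<^bsub>P\<^esub>" using eq r(2) a a_carrier by auto
  have "deg R q \<le> deg R r"
  proof (rule ccontr)
    assume "\<not> deg R q \<le> deg R r"
    moreover have "a = r \<ominus>\<^bsub>P\<^esub> q" using eq a_carrier q_carrier by algebra
    ultimately have deg_a: "deg R a = deg R q"
      using deg_minus_eq[OF r(1) q_carrier] by simp
    then have "a \<noteq> \<zero>\<^bsub>P\<^esub>" using \<open>\<not> deg R q \<le> deg R r\<close> by auto
    then show False
      using missing_span_deg[OF q q_nonzero] deg_a a unfolding missing_residues_def by auto
  qed
  with q_nonzero show ?thesis by blast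
qed

lemma separating_multiple:
  assumes r: "r \<in> carrier P" "r \<notin> A"
  shows "\<exists>f\<in>carrier P. f \<noteq> \<zero>\<^bsub>P\<^esub> \<and> (\<forall>a\<in>A. \<forall>m\<in>carrier P. r \<noteq> a \<oplus>\<^bsub>P\<^esub> f \<otimes>\<^bsub>P\<^esub> m)"
proof -
  obtain h where h: "h \<in> carrier P" "h \<noteq> \<zero>\<^bsub>P\<^esub>" "\<And>m. m \<in> carrier P \<Longrightarrow> h \<otimes>\<^bsub>P\<^esub> m \<in> A_plus_span"
    using multiplier_into_A_plus_span by blast
  define n where "n = Suc (deg R r)"
  define f where "f = g [^]\<^bsub>P\<^esub> n \<otimes>\<^bsub>P\<^esub> h"
  have f: "f \<in> carrier P" "f \<noteq> \<zero>\<^bsub>P\<^esub>"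
    unfolding f_def using h g_pow by (simp_all add: domain.integral_iff[OF UP_domain])
  have "r \<noteq> a \<oplus>\<^bsub>P\<^esub> f \<otimes>\<^bsub>P\<^esub> m" if a: "a \<in> A" and m: "m \<in> carrier P" for a m
  proof
    assume eq: "r = a \<oplus>\<^bsub>P\<^esub> f \<otimes>\<^bsub>P\<^esub> m"
    obtain a' q' where aq': "a' \<in> A" "q' \<in> missing_span" "h \<otimes>\<^bsub>P\<^esub> m = a' \<oplus>\<^bsub>P\<^esub> q'"
      using h(3)[OF m] by (rule A_plus_spanE)
    have "r = (a \<oplus>\<^bsub>P\<^esub> g [^]\<^bsub>P\<^esub> n \<otimes>\<^bsub>P\<^esub> a') \<oplus>\<^bsub>P\<^esub> g [^]\<^bsub>P\<^esub> n \<otimes>\<^bsub>P\<^esub> q'"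
    proof -
      have "f \<otimes>\<^bsub>P\<^esub> m = g [^]\<^bsub>P\<^esub> n \<otimes>\<^bsub>P\<^esub> (a' \<oplus>\<^bsub>P\<^esub> q')"
        unfolding f_def aq'(3)[symmetric] using g_pow h m by (simp add: P.m_assoc)
      then show ?thesis
        using eq a aq' g_pow A_carrier missing_span_carrier by (simp add: P.r_distr P.a_assoc)
    qed
    then have "g [^]\<^bsub>P\<^esub> n \<otimes>\<^bsub>P\<^esub> q' \<noteq> \<zero>\<^bsub>P\<^esub> \<and> deg R (g [^]\<^bsub>P\<^esub> n \<otimes>\<^bsub>P\<^esub> q') \<le> deg R r"
      using span_component_deg_le r A.a_closed[OF a g_pow_mult_A[OF aq'(1)]]
        missing_span_g_pow_mult[OF aq'(2)] by blast
    moreover have q'_carrier: "q' \<in> carrier P" using aq'(2) by (rule missing_span_carrier)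
    ultimately have "q' \<noteq> \<zero>\<^bsub>P\<^esub>" "deg R (g [^]\<^bsub>P\<^esub> n \<otimes>\<^bsub>P\<^esub> q') \<le> deg R r"
      using g_pow by auto
    then have "n * deg R g \<le> deg R r" using g_pow q'_carrier by simp
    moreover have "n \<le> n * deg R g" using deg_g_pos by simp
    ultimately show False unfolding n_def by linarith
  qed
  with f show ?thesis by blast
qed

end

lemma (in UP_prime_field) separating_multiple_exists:
  assumes r: "r \<in> carrier P" and A: "nonunital_subring A P" and rA: "r \<notin> A"
  shows "\<exists>f\<in>carrier P. f \<noteq> \<zero>\<^bsub>P\<^esub> \<and> (\<forall>a\<in>A. \<forall>m\<in>carrier P. r \<noteq> a \<oplus>\<^bsub>P\<^esub> f \<otimes>\<^bsub>P\<^esub> m)"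
proof (cases "\<exists>g\<in>A. 0 < deg R g")
  case True
  then obtain g where g: "g \<in> A" "0 < deg R g" by blast
  interpret nonconstant_subring R P A g
    by (intro nonconstant_subring.intro UP_prime_field_axioms nonconstant_subring_axioms.intro g)
      (use A P_def in simp_all)
  show ?thesis by (rule separating_multiple[OF r rA])
next
  case False
  then show ?thesis
    using separating_multiple_of_low_degree[OF r rA] A unfolding nonunital_subring_def by auto
qed

lemma (in UP_prime_field) finitely_separable_UP: "finitely_separable P"
  using finitely_separable_if_separating_multiples[OF finite_carrier separating_multiple_exists]
  by blast

lemma (in residues) add_pow_one:
  fixes n :: nat
  shows "[n] \<cdot> \<one> = int n mod m"
proof (induct n)
  case 0
  then show ?case by (simp add: res_zero_eq)
next
  case (Suc n)
  have "[Suc n] \<cdot> \<one> = [n] \<cdot> \<one> \<oplus> \<one>" by (simp add: add.nat_pow_Suc)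
  also have "\<dots> = (int n mod m + 1) mod m" using Suc by (simp add: res_add_eq res_one_eq)
  also have "\<dots> = int (Suc n) mod m" by (metis mod_add_left_eq of_nat_Suc add.commute)
  finally show ?case .
qed

lemma (in residues) carrier_generated_by_one: "carrier R \<subseteq> range (\<lambda>n::nat. [n] \<cdot> \<one>)"
proof
  fix x assume "x \<in> carrier R"
  then have "0 \<le> x" "x < m" by (auto simp: res_carrier_eq)
  then show "x \<in> range (\<lambda>n::nat. [n] \<cdot> \<one>)"
    by (intro image_eqI[of _ _ "nat x"]) (simp_all add: add_pow_one)
qed

lemma residue_ring_UP_prime_field:
  fixes p :: int
  assumes p: "Factorial_Ring.prime p"
  shows "UP_prime_field (residue_ring p)"
proof -
  have p_nonneg: "0 \<le> p" by (rule prime_ge_0_int[OF p])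
  interpret residues_prime "nat p" "residue_ring p"
    by unfold_locales (simp_all add: p p_nonneg)
  show ?thesis
    by (intro UP_prime_field.intro UP_field.intro UP_prime_field_axioms.intro is_field finite
        carrier_generated_by_one)
qed

theorem proposition6:
  fixes p :: int
  assumes "Factorial_Ring.prime p"
  shows "finitely_separable (UP (residue_ring p))"
proof -
  interpret UP_prime_field "residue_ring p" "UP (residue_ring p)"
    by (rule residue_ring_UP_prime_field[OF assms])
  show ?thesis by (rule finitely_separable_UP)
qed

end
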